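(* Let $H_1$ and $H_2$ be reduced valuation monoids such that their quotient groups $\mathsf{q}(H_1)$ and $\mathsf{q}(H_2)$ are isomorphic. Then the reduced finitary power monoids $\mathcal{P}_{\mathrm{fin},1}(H_1)$ and $\mathcal{P}_{\mathrm{fin},1}(H_2)$ are isomorphic.
   Context: All monoids are written multiplicatively. A commutative monoid $H$ is cancellative if $ac=bc$ implies $a=b$ for all $a,b,c\in H$. For a commutative cancellative monoid $H$, $\mathsf{q}(H)$ denotes its quotient (Grothendieck) group, with $H\subseteq \mathsf{q}(H)$ and $\mathsf{q}(H)=\{ab^{-1}: a,b\in H\}$. A commutative cancellative monoid $H$ is a valuation monoid if for every $x\in\mathsf{q}(H)$ we have $x\in H$ or $x^{-1}\in H$; it is reduced if its only invertible element is the identity $1$. For a monoid $H$ with identity $1$, $\mathcal{P}_{\mathrm{fin},1}(H)$ is the set of all finite subsets of $H$ containing $1$, which is a monoid under setwise multiplication $(X,Y)\mapsto\{xy: x\in X, y\in Y\}$ with identity $\{1\}$. *)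

theory Defs
  imports "HOL-Algebra.Group"
begin

definition cancellative_monoid :: "('a, 'm) monoid_scheme \<Rightarrow> bool" where
  "cancellative_monoid H \<longleftrightarrow>
     (\<forall>a\<in>carrier H. \<forall>b\<in>carrier H. \<forall>c\<in>carrier H. a \<otimes>\<^bsub>H\<^esub> c = b \<otimes>\<^bsub>H\<^esub> c \<longrightarrow> a = b)"

definition is_quotient_group ::
  "('a, 'm) monoid_scheme \<Rightarrow> ('b, 'n) monoid_scheme \<Rightarrow> ('a \<Rightarrow> 'b) \<Rightarrow> bool" where
  "is_quotient_group H G f \<longleftrightarrow>
     comm_group G \<and> f \<in> hom H G \<and> inj_on f (carrier H) \<and>
     carrier G = {f a \<otimes>\<^bsub>G\<^esub> inv\<^bsub>G\<^esub> (f b) | a b. a \<in> carrier H \<and> b \<in> carrier H}"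

definition valuation_wrt ::
  "('a, 'm) monoid_scheme \<Rightarrow> ('b, 'n) monoid_scheme \<Rightarrow> ('a \<Rightarrow> 'b) \<Rightarrow> bool" where
  "valuation_wrt H G f \<longleftrightarrow>
     (\<forall>x\<in>carrier G. x \<in> f ` carrier H \<or> inv\<^bsub>G\<^esub> x \<in> f ` carrier H)"

definition reduced_monoid :: "('a, 'm) monoid_scheme \<Rightarrow> bool" where
  "reduced_monoid H \<longleftrightarrow> Units H = {\<one>\<^bsub>H\<^esub>}"

definition Pfin1 :: "('a, 'm) monoid_scheme \<Rightarrow> 'a set monoid" where
  "Pfin1 H = \<lparr> carrier = {X. finite X \<and> X \<subseteq> carrier H \<and> \<one>\<^bsub>H\<^esub> \<in> X},
              mult = (\<lambda>X Y. {x \<otimes>\<^bsub>H\<^esub> y | x y. x \<in> X \<and> y \<in> Y}),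
              one = {\<one>\<^bsub>H\<^esub>} \<rparr>"

end

theory Submission
  imports Defs "HOL-Algebra.Coset"
begin

text \<open>Being a valuation monoid and being reduced say that
  f H is the positive cone of a total order on G: of x and x^-1 at least one lies in f H, and both
  only for x = 1. So every nonempty finite Y \<subseteq> G has a least element y, and y^-1 Y is the image
  under f of the unique element of P_fin,1(H) whose image is a translate of Y. This normal form is
  multiplicative, so P_fin,1(H) is the monoid of nonempty finite subsets of G modulo translation,
  which depends on G alone. Explicitly, an isomorphism phi of quotient groups induces
  X \<mapsto> normal form of phi (f1 X), with inverse built in the same way from phi^-1.\<close>

definition nonempty_finite_subsets :: "('a, 'm) monoid_scheme \<Rightarrow> 'a set set" where
  "nonempty_finite_subsets G = {Y. finite Y \<and> Y \<noteq> {} \<and> Y \<subseteq> carrier G}"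

lemma carrier_Pfin1: "Z \<in> carrier (Pfin1 H) \<longleftrightarrow> finite Z \<and> Z \<subseteq> carrier H \<and> \<one>\<^bsub>H\<^esub> \<in> Z"
  by (simp add: Pfin1_def)

lemma Pfin1_subset_nonempty_finite_subsets: "carrier (Pfin1 H) \<subseteq> nonempty_finite_subsets H"
  by (auto simp: carrier_Pfin1 nonempty_finite_subsets_def)

lemma image_nonempty_finite_subsets:
  "h \<in> hom G H \<Longrightarrow> Y \<in> nonempty_finite_subsets G \<Longrightarrow> h ` Y \<in> nonempty_finite_subsets H"
  by (auto simp: nonempty_finite_subsets_def hom_def)

lemma Pfin1_mult: "X \<otimes>\<^bsub>Pfin1 H\<^esub> Y = X <#>\<^bsub>H\<^esub> Y"
  by (auto simp: Pfin1_def set_mult_def)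

lemma (in monoid) Pfin1_mult_closed:
  assumes "X \<in> carrier (Pfin1 G)" and "Y \<in> carrier (Pfin1 G)"
  shows "X \<otimes>\<^bsub>Pfin1 G\<^esub> Y \<in> carrier (Pfin1 G)"
proof -
  have "\<one> \<in> X" and "\<one> \<in> Y"
    using assms by (simp_all add: carrier_Pfin1)
  then have "\<one> \<otimes> \<one> \<in> X <#> Y"
    unfolding set_mult_def by blast
  moreover have "finite (X <#> Y)"
    using assms by (simp add: carrier_Pfin1 set_mult_def)
  ultimately show ?thesis
    using assms set_mult_closed by (simp add: Pfin1_mult carrier_Pfin1)
qed

lemma l_coset_hom:
  "h \<in> hom G H \<Longrightarrow> A \<subseteq> carrier G \<Longrightarrow> g \<in> carrier G \<Longrightarrow> h ` (g <#\<^bsub>G\<^esub> A) = h g <#\<^bsub>H\<^esub> h ` A"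
  by (simp add: l_coset_eq_set_mult set_mult_hom)

lemma (in comm_group) set_mult_l_coset:
  "A \<subseteq> carrier G \<Longrightarrow> B \<subseteq> carrier G \<Longrightarrow> g \<in> carrier G \<Longrightarrow> h \<in> carrier G \<Longrightarrow>
    (g <# A) <#> (h <# B) = (g \<otimes> h) <# (A <#> B)"
  by (force simp: l_coset_def set_mult_def m_ac)

locale reduced_valuation_monoid =
  H: monoid H + G: comm_group G
  for H :: "('a, 'm) monoid_scheme" and G :: "('c, 'o) monoid_scheme" +
  fixes f :: "'a \<Rightarrow> 'c"
  assumes quotient: "is_quotient_group H G f"
    and valuation: "valuation_wrt H G f"
    and reduced: "reduced_monoid H"
begin

lemma f_hom: "f \<in> hom H G"
  using quotient by (simp add: is_quotient_group_def)

lemma f_inj: "inj_on f (carrier H)"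
  using quotient by (simp add: is_quotient_group_def)

lemma f_closed: "a \<in> carrier H \<Longrightarrow> f a \<in> carrier G"
  using f_hom by (auto simp: hom_def)

lemma f_mult: "a \<in> carrier H \<Longrightarrow> b \<in> carrier H \<Longrightarrow> f (a \<otimes>\<^bsub>H\<^esub> b) = f a \<otimes>\<^bsub>G\<^esub> f b"
  using f_hom by (rule hom_mult)

lemma f_one: "f \<one>\<^bsub>H\<^esub> = \<one>\<^bsub>G\<^esub>"
proof -
  have "f \<one>\<^bsub>H\<^esub> \<otimes>\<^bsub>G\<^esub> f \<one>\<^bsub>H\<^esub> = f \<one>\<^bsub>H\<^esub>"
    using f_mult[of "\<one>\<^bsub>H\<^esub>" "\<one>\<^bsub>H\<^esub>"] by simp
  then show ?thesis
    using G.l_cancel_one f_closed by simp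
qed

lemma one_in_f_image: "\<one>\<^bsub>G\<^esub> \<in> f ` carrier H"
  using f_one H.one_closed by (metis image_eqI)

lemma f_image_mult_closed:
  "x \<in> f ` carrier H \<Longrightarrow> y \<in> f ` carrier H \<Longrightarrow> x \<otimes>\<^bsub>G\<^esub> y \<in> f ` carrier H"
  by (auto simp: f_mult[symmetric])

lemma f_image_total: "x \<in> carrier G \<Longrightarrow> x \<in> f ` carrier H \<or> inv\<^bsub>G\<^esub> x \<in> f ` carrier H"
  using valuation by (simp add: valuation_wrt_def)

lemma f_image_antisym:
  assumes "x \<in> f ` carrier H" and "inv\<^bsub>G\<^esub> x \<in> f ` carrier H"
  shows "x = \<one>\<^bsub>G\<^esub>"
proof -
  obtain a b where a: "a \<in> carrier H" "x = f a" and b: "b \<in> carrier H" "inv\<^bsub>G\<^esub> x = f b"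
    using assms by blast
  have "f a \<in> carrier G"
    using a f_closed by simp
  then have "f (a \<otimes>\<^bsub>H\<^esub> b) = f \<one>\<^bsub>H\<^esub>" "f (b \<otimes>\<^bsub>H\<^esub> a) = f \<one>\<^bsub>H\<^esub>"
    using a b G.r_inv[of "f a"] G.l_inv[of "f a"] by (simp_all add: f_mult f_one)
  then have "a \<otimes>\<^bsub>H\<^esub> b = \<one>\<^bsub>H\<^esub>" "b \<otimes>\<^bsub>H\<^esub> a = \<one>\<^bsub>H\<^esub>"
    using a b f_inj by (auto dest: inj_onD)
  then have "a \<in> Units H"
    using a b by (auto simp: Units_def)
  then show ?thesis
    using reduced a f_one by (simp add: reduced_monoid_def)
qed

lemma least_element:
  assumes "Y \<in> nonempty_finite_subsets G"
  shows "\<exists>y\<in>Y. inv\<^bsub>G\<^esub> y <#\<^bsub>G\<^esub> Y \<subseteq> f ` carrier H"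
proof -
  have "finite Y" "Y \<noteq> {}" "Y \<subseteq> carrier G"
    using assms by (simp_all add: nonempty_finite_subsets_def)
  then show ?thesis
  proof (induction Y rule: finite_ne_induct)
    case (singleton x)
    then show ?case
      using one_in_f_image by (auto simp: l_coset_def)
  next
    case (insert x Y)
    then obtain y where y: "y \<in> Y" "inv\<^bsub>G\<^esub> y <#\<^bsub>G\<^esub> Y \<subseteq> f ` carrier H"
      by auto
    have x: "x \<in> carrier G" and Y: "Y \<subseteq> carrier G" and "y \<in> carrier G"
      using insert y by auto
    have x_self: "inv\<^bsub>G\<^esub> x \<otimes>\<^bsub>G\<^esub> x \<in> f ` carrier H"
      using x one_in_f_image by simp
    show ?case
    proof (cases "inv\<^bsub>G\<^esub> x \<otimes>\<^bsub>G\<^esub> y \<in> f ` carrier H")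
      case True
      have "inv\<^bsub>G\<^esub> x \<otimes>\<^bsub>G\<^esub> z \<in> f ` carrier H" if "z \<in> Y" for z
      proof -
        have "z \<in> carrier G"
          using Y that by blast
        then have "inv\<^bsub>G\<^esub> x \<otimes>\<^bsub>G\<^esub> z = (inv\<^bsub>G\<^esub> x \<otimes>\<^bsub>G\<^esub> y) \<otimes>\<^bsub>G\<^esub> (inv\<^bsub>G\<^esub> y \<otimes>\<^bsub>G\<^esub> z)"
          using x \<open>y \<in> carrier G\<close> by (simp add: G.m_assoc flip: G.m_assoc[of y])
        then show ?thesis
          using f_image_mult_closed True y(2) that by (auto simp: l_coset_def)
      qed
      then show ?thesis
        using x_self by (auto simp: l_coset_def)
    next
      case False
      then have "inv\<^bsub>G\<^esub> y \<otimes>\<^bsub>G\<^esub> x \<in> f ` carrier H"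
        using f_image_total[of "inv\<^bsub>G\<^esub> x \<otimes>\<^bsub>G\<^esub> y"] x \<open>y \<in> carrier G\<close>
        by (simp add: G.inv_mult_group)
      then show ?thesis
        using y by (auto simp: l_coset_def)
    qed
  qed
qed

lemma translate_into_Pfin1:
  assumes "Y \<in> nonempty_finite_subsets G"
  obtains Z g where "Z \<in> carrier (Pfin1 H)" "g \<in> carrier G" "f ` Z = g <#\<^bsub>G\<^esub> Y"
proof -
  obtain y where y: "y \<in> Y" "inv\<^bsub>G\<^esub> y <#\<^bsub>G\<^esub> Y \<subseteq> f ` carrier H"
    using least_element assms by blast
  have Y: "finite Y" "Y \<subseteq> carrier G"
    using assms by (simp_all add: nonempty_finite_subsets_def)
  define Z where "Z = {a \<in> carrier H. f a \<in> inv\<^bsub>G\<^esub> y <#\<^bsub>G\<^esub> Y}"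
  have fZ: "f ` Z = inv\<^bsub>G\<^esub> y <#\<^bsub>G\<^esub> Y"
    using y(2) by (auto simp: Z_def)
  have "finite Z"
  proof (rule finite_imageD)
    show "finite (f ` Z)"
      using fZ Y(1) by (simp add: l_coset_def)
    show "inj_on f Z"
      using f_inj by (rule inj_on_subset) (simp add: Z_def)
  qed
  moreover have "\<one>\<^bsub>H\<^esub> \<in> Z"
    using y(1) Y(2) f_one by (force simp: Z_def l_coset_def)
  ultimately have "Z \<in> carrier (Pfin1 H)"
    by (auto simp: carrier_Pfin1 Z_def)
  moreover have "inv\<^bsub>G\<^esub> y \<in> carrier G"
    using y(1) Y(2) by blast
  ultimately show ?thesis
    using fZ that by blast
qed

text \<open>Reducedness makes the translate unique: a translation factor g with f Z' = g f Z
  lies in f H (as g = g f 1), and so does its inverse (as f 1 is in g f Z).\<close>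

lemma translate_in_Pfin1_unique:
  assumes Z: "Z \<in> carrier (Pfin1 H)" and Z': "Z' \<in> carrier (Pfin1 H)"
    and g: "g \<in> carrier G" and eq: "f ` Z' = g <#\<^bsub>G\<^esub> f ` Z"
  shows "Z' = Z"
proof -
  have ZH: "Z \<subseteq> carrier H" "\<one>\<^bsub>H\<^esub> \<in> Z" and Z'H: "Z' \<subseteq> carrier H" "\<one>\<^bsub>H\<^esub> \<in> Z'"
    using Z Z' by (simp_all add: carrier_Pfin1)
  have "g \<in> f ` Z'"
    using eq ZH(2) g f_one by (force simp: l_coset_def)
  moreover have "\<one>\<^bsub>G\<^esub> \<in> g <#\<^bsub>G\<^esub> f ` Z"
    using eq Z'H(2) f_one by (metis imageI)
  then obtain z where "z \<in> Z" "g \<otimes>\<^bsub>G\<^esub> f z = \<one>\<^bsub>G\<^esub>"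
    by (auto simp: l_coset_def)
  then have "inv\<^bsub>G\<^esub> g \<in> f ` Z"
    using g ZH(1) f_closed by (metis G.inv_equality G.m_comm image_eqI subsetD)
  ultimately have "g = \<one>\<^bsub>G\<^esub>"
    using f_image_antisym Z'H(1) ZH(1) by blast
  moreover have "f ` Z \<subseteq> carrier G"
    using ZH(1) f_closed by blast
  ultimately have "f ` Z' = f ` Z"
    using eq by (simp add: G.lcos_mult_one)
  then show ?thesis
    using inj_on_image_eq_iff[OF f_inj Z'H(1) ZH(1)] by simp
qed

text \<open>Only meaningful for nonempty finite Y \<subseteq> G; otherwise the description may fail and THE
  returns an unspecified set.\<close>

definition normal_form :: "'c set \<Rightarrow> 'a set" where
  "normal_form Y = (THE Z. Z \<in> carrier (Pfin1 H) \<and> (\<exists>g\<in>carrier G. f ` Z = g <#\<^bsub>G\<^esub> Y))"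

lemma normal_form_eqI:
  assumes Y: "Y \<subseteq> carrier G" and Z: "Z \<in> carrier (Pfin1 H)"
    and g: "g \<in> carrier G" and eq: "f ` Z = g <#\<^bsub>G\<^esub> Y"
  shows "normal_form Y = Z"
  unfolding normal_form_def
proof (rule the_equality)
  show "Z \<in> carrier (Pfin1 H) \<and> (\<exists>g\<in>carrier G. f ` Z = g <#\<^bsub>G\<^esub> Y)"
    using Z g eq by blast
next
  fix Z' assume "Z' \<in> carrier (Pfin1 H) \<and> (\<exists>g\<in>carrier G. f ` Z' = g <#\<^bsub>G\<^esub> Y)"
  then obtain g' where Z': "Z' \<in> carrier (Pfin1 H)" and g': "g' \<in> carrier G"
    and eq': "f ` Z' = g' <#\<^bsub>G\<^esub> Y"
    by blast
  have "f ` Z' = (g' \<otimes>\<^bsub>G\<^esub> inv\<^bsub>G\<^esub> g) <#\<^bsub>G\<^esub> f ` Z"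
    using Y g g' by (simp add: eq eq' G.lcos_m_assoc G.m_assoc)
  then show "Z' = Z"
    by (rule translate_in_Pfin1_unique[OF Z Z' G.m_closed[OF g' G.inv_closed[OF g]]])
qed

lemma normal_form:
  assumes "Y \<in> nonempty_finite_subsets G"
  shows "normal_form Y \<in> carrier (Pfin1 H)" and "\<exists>g\<in>carrier G. f ` normal_form Y = g <#\<^bsub>G\<^esub> Y"
proof -
  obtain Z g where Z: "Z \<in> carrier (Pfin1 H)" and g: "g \<in> carrier G" and eq: "f ` Z = g <#\<^bsub>G\<^esub> Y"
    using translate_into_Pfin1[OF assms] .
  have "Y \<subseteq> carrier G"
    using assms by (simp add: nonempty_finite_subsets_def)
  then have "normal_form Y = Z"
    using Z g eq by (rule normal_form_eqI)
  then show "normal_form Y \<in> carrier (Pfin1 H)" "\<exists>g\<in>carrier G. f ` normal_form Y = g <#\<^bsub>G\<^esub> Y"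
    using Z g eq by auto
qed

lemma normal_form_l_coset:
  assumes "Y \<in> nonempty_finite_subsets G" and h: "h \<in> carrier G"
  shows "normal_form (h <#\<^bsub>G\<^esub> Y) = normal_form Y"
proof -
  obtain g where g: "g \<in> carrier G" and eq: "f ` normal_form Y = g <#\<^bsub>G\<^esub> Y"
    using normal_form(2)[OF assms(1)] by blast
  have N: "normal_form Y \<in> carrier (Pfin1 H)"
    using normal_form(1)[OF assms(1)] .
  have Y: "Y \<subseteq> carrier G"
    using assms by (simp add: nonempty_finite_subsets_def)
  have "f ` normal_form Y = (g \<otimes>\<^bsub>G\<^esub> inv\<^bsub>G\<^esub> h) <#\<^bsub>G\<^esub> (h <#\<^bsub>G\<^esub> Y)"
    using Y g h by (simp add: eq G.lcos_m_assoc G.m_assoc)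
  then show ?thesis
    by (rule normal_form_eqI[OF G.l_coset_subset_G[OF Y h] N G.m_closed[OF g G.inv_closed[OF h]]])
qed

lemma normal_form_image:
  assumes "Z \<in> carrier (Pfin1 H)"
  shows "normal_form (f ` Z) = Z"
proof (rule normal_form_eqI)
  show "f ` Z \<subseteq> carrier G"
    using assms f_closed by (auto simp: carrier_Pfin1)
  then show "f ` Z = \<one>\<^bsub>G\<^esub> <#\<^bsub>G\<^esub> f ` Z"
    by (simp add: G.lcos_mult_one)
qed (use assms in simp_all)

lemma normal_form_set_mult:
  assumes Y1: "Y1 \<in> nonempty_finite_subsets G" and Y2: "Y2 \<in> nonempty_finite_subsets G"
  shows "normal_form (Y1 <#>\<^bsub>G\<^esub> Y2) = normal_form Y1 \<otimes>\<^bsub>Pfin1 H\<^esub> normal_form Y2"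
proof -
  obtain g1 where g1: "g1 \<in> carrier G" and eq1: "f ` normal_form Y1 = g1 <#\<^bsub>G\<^esub> Y1"
    using normal_form(2)[OF Y1] by blast
  have N1: "normal_form Y1 \<in> carrier (Pfin1 H)"
    using normal_form(1)[OF Y1] .
  obtain g2 where g2: "g2 \<in> carrier G" and eq2: "f ` normal_form Y2 = g2 <#\<^bsub>G\<^esub> Y2"
    using normal_form(2)[OF Y2] by blast
  have N2: "normal_form Y2 \<in> carrier (Pfin1 H)"
    using normal_form(1)[OF Y2] .
  have sub: "Y1 \<subseteq> carrier G" "Y2 \<subseteq> carrier G"
    using Y1 Y2 by (simp_all add: nonempty_finite_subsets_def)
  have "f ` (normal_form Y1 \<otimes>\<^bsub>Pfin1 H\<^esub> normal_form Y2)
      = f ` normal_form Y1 <#>\<^bsub>G\<^esub> f ` normal_form Y2"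
    using N1 N2 by (simp add: Pfin1_mult set_mult_hom[OF f_hom] carrier_Pfin1)
  also have "\<dots> = (g1 \<otimes>\<^bsub>G\<^esub> g2) <#\<^bsub>G\<^esub> (Y1 <#>\<^bsub>G\<^esub> Y2)"
    using sub g1 g2 by (simp add: eq1 eq2 G.set_mult_l_coset)
  finally show ?thesis
    by (rule normal_form_eqI[OF G.set_mult_closed[OF sub] H.Pfin1_mult_closed[OF N1 N2]
          G.m_closed[OF g1 g2]])
qed

lemma normal_form_image_hom:
  assumes K: "monoid K" and \<theta>: "\<theta> \<in> hom K G"
  shows "(\<lambda>X. normal_form (\<theta> ` X)) \<in> hom (Pfin1 K) (Pfin1 H)"
proof (rule homI)
  have image: "\<theta> ` X \<in> nonempty_finite_subsets G" if "X \<in> carrier (Pfin1 K)" for X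
    using that Pfin1_subset_nonempty_finite_subsets image_nonempty_finite_subsets[OF \<theta>] by blast
  fix X assume "X \<in> carrier (Pfin1 K)"
  then show "normal_form (\<theta> ` X) \<in> carrier (Pfin1 H)"
    using image normal_form(1) by blast
  fix Y assume "Y \<in> carrier (Pfin1 K)"
  have "\<theta> ` (X \<otimes>\<^bsub>Pfin1 K\<^esub> Y) = \<theta> ` X <#>\<^bsub>G\<^esub> \<theta> ` Y"
    using \<open>X \<in> carrier (Pfin1 K)\<close> \<open>Y \<in> carrier (Pfin1 K)\<close>
    by (simp add: Pfin1_mult set_mult_hom[OF \<theta>] carrier_Pfin1)
  then show "normal_form (\<theta> ` (X \<otimes>\<^bsub>Pfin1 K\<^esub> Y))
      = normal_form (\<theta> ` X) \<otimes>\<^bsub>Pfin1 H\<^esub> normal_form (\<theta> ` Y)"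
    using normal_form_set_mult image \<open>X \<in> carrier (Pfin1 K)\<close> \<open>Y \<in> carrier (Pfin1 K)\<close> by simp
qed

end

lemma normal_form_round_trip:
  assumes A: "reduced_valuation_monoid H1 G1 f1" and B: "reduced_valuation_monoid H2 G2 f2"
    and \<phi>: "\<phi> \<in> hom G1 G2" and \<psi>: "\<psi> \<in> hom G2 G1"
    and inverse: "\<And>x. x \<in> carrier G1 \<Longrightarrow> \<psi> (\<phi> x) = x"
    and X: "X \<in> carrier (Pfin1 H1)"
  shows "reduced_valuation_monoid.normal_form H1 G1 f1
      ((\<psi> \<circ> f2) ` reduced_valuation_monoid.normal_form H2 G2 f2 ((\<phi> \<circ> f1) ` X)) = X"
proof -
  interpret A: reduced_valuation_monoid H1 G1 f1 by (rule A)
  interpret B: reduced_valuation_monoid H2 G2 f2 by (rule B)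
  have f1X: "f1 ` X \<in> nonempty_finite_subsets G1"
    using X Pfin1_subset_nonempty_finite_subsets image_nonempty_finite_subsets[OF A.f_hom] by blast
  then have "\<phi> ` f1 ` X \<in> nonempty_finite_subsets G2"
    by (rule image_nonempty_finite_subsets[OF \<phi>])
  then obtain g where g: "g \<in> carrier G2"
    and eq: "f2 ` B.normal_form (\<phi> ` f1 ` X) = g <#\<^bsub>G2\<^esub> \<phi> ` f1 ` X"
    using B.normal_form(2) by blast
  have sub: "f1 ` X \<subseteq> carrier G1" "\<phi> ` f1 ` X \<subseteq> carrier G2"
    using f1X image_nonempty_finite_subsets[OF \<phi> f1X] by (simp_all add: nonempty_finite_subsets_def)
  have "\<psi> ` f2 ` B.normal_form (\<phi> ` f1 ` X) = \<psi> g <#\<^bsub>G1\<^esub> \<psi> ` \<phi> ` f1 ` X"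
    unfolding eq by (rule l_coset_hom[OF \<psi> sub(2) g])
  also have "\<psi> ` \<phi> ` f1 ` X = (\<lambda>x. x) ` f1 ` X"
    unfolding image_image by (rule image_cong) (use sub(1) inverse in auto)
  also have "\<dots> = f1 ` X"
    by simp
  finally have "(\<psi> \<circ> f2) ` B.normal_form ((\<phi> \<circ> f1) ` X) = \<psi> g <#\<^bsub>G1\<^esub> f1 ` X"
    unfolding image_comp[symmetric] .
  moreover have "\<psi> g \<in> carrier G1"
    using \<psi> g by (auto simp: hom_def)
  ultimately show ?thesis
    using A.normal_form_l_coset[OF f1X] A.normal_form_image[OF X] by simp
qed

lemma Pfin1_iso_if_quotient_groups_iso:
  assumes A: "reduced_valuation_monoid H1 G1 f1" and B: "reduced_valuation_monoid H2 G2 f2"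
    and \<phi>: "\<phi> \<in> iso G1 G2"
  shows "Pfin1 H1 \<cong> Pfin1 H2"
proof -
  interpret A: reduced_valuation_monoid H1 G1 f1 by (rule A)
  interpret B: reduced_valuation_monoid H2 G2 f2 by (rule B)
  define \<psi> where "\<psi> = inv_into (carrier G1) \<phi>"
  have \<psi>: "\<psi> \<in> iso G2 G1"
    unfolding \<psi>_def by (rule A.G.iso_set_sym[OF \<phi>])
  have bij: "bij_betw \<phi> (carrier G1) (carrier G2)"
    using \<phi> by (simp add: iso_def)
  have \<psi>\<phi>: "\<psi> (\<phi> x) = x" if "x \<in> carrier G1" for x
    using bij that by (simp add: \<psi>_def bij_betw_def)
  have \<phi>\<psi>: "\<phi> (\<psi> y) = y" if "y \<in> carrier G2" for y
    using bij that by (simp add: \<psi>_def bij_betw_def f_inv_into_f)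
  have hom: "\<phi> \<in> hom G1 G2" "\<psi> \<in> hom G2 G1"
    using \<phi> \<psi> by (simp_all add: iso_def)
  let ?\<Psi> = "\<lambda>X. B.normal_form ((\<phi> \<circ> f1) ` X)"
  let ?\<Psi>' = "\<lambda>Z. A.normal_form ((\<psi> \<circ> f2) ` Z)"
  have \<Psi>: "?\<Psi> \<in> hom (Pfin1 H1) (Pfin1 H2)"
    using B.normal_form_image_hom A.H.monoid_axioms hom_compose[OF A.f_hom hom(1)] by blast
  have \<Psi>': "?\<Psi>' \<in> hom (Pfin1 H2) (Pfin1 H1)"
    using A.normal_form_image_hom B.H.monoid_axioms hom_compose[OF B.f_hom hom(2)] by blast
  have "bij_betw ?\<Psi> (carrier (Pfin1 H1)) (carrier (Pfin1 H2))"
  proof (rule bij_betw_byWitness[where f' = ?\<Psi>'])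
    show "\<forall>X\<in>carrier (Pfin1 H1). ?\<Psi>' (?\<Psi> X) = X"
      using normal_form_round_trip[OF A B hom \<psi>\<phi>] by blast
    show "\<forall>Z\<in>carrier (Pfin1 H2). ?\<Psi> (?\<Psi>' Z) = Z"
      using normal_form_round_trip[OF B A hom(2,1) \<phi>\<psi>] by blast
  qed (use \<Psi> \<Psi>' in \<open>auto simp: hom_def\<close>)
  then show ?thesis
    using \<Psi> by (intro is_isoI isoI)
qed

theorem theorem2:
  fixes H1 :: "('a, 'm) monoid_scheme" and H2 :: "('b, 'n) monoid_scheme"
    and G1 :: "('c, 'o) monoid_scheme" and G2 :: "('d, 'p) monoid_scheme"
    and f1 :: "'a \<Rightarrow> 'c" and f2 :: "'b \<Rightarrow> 'd"
  assumes "comm_monoid H1" and "cancellative_monoid H1"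
    and "comm_monoid H2" and "cancellative_monoid H2"
    and "is_quotient_group H1 G1 f1" and "is_quotient_group H2 G2 f2"
    and "valuation_wrt H1 G1 f1" and "valuation_wrt H2 G2 f2"
    and "reduced_monoid H1" and "reduced_monoid H2"
    and "G1 \<cong> G2"
  shows "Pfin1 H1 \<cong> Pfin1 H2"
proof -
  have "reduced_valuation_monoid H1 G1 f1" "reduced_valuation_monoid H2 G2 f2"
    using assms(1,3,5-10)
    by (auto simp: reduced_valuation_monoid_def reduced_valuation_monoid_axioms_def
        comm_monoid_def is_quotient_group_def)
  moreover obtain \<phi> where "\<phi> \<in> iso G1 G2"
    using assms(11) by (auto simp: is_iso_def)
  ultimately show ?thesis
    by (intro Pfin1_iso_if_quotient_groups_iso)
qed

end
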